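(* Under the standing assumptions below, let $w_0(h)=\sqrt{\varepsilon_0(h)}\,z_0(h)$ and $G_h(w)=1+\frac{w}{\sqrt{\varepsilon_0(h)}}-w^2$. Then $G_h(w_0(h))>0$, $\varepsilon_0$ is differentiable on $[0,\infty)$, and $$\varepsilon_0'(h)=\frac{2\varepsilon_0(h)\,G_h(w_0(h))}{1+h\,G_h(w_0(h))}>0\qquad (h\ge0).$$
   Context: Let $K:\mathbb R\to[0,\infty)$ be measurable with $K(s)=K(-s)$ for all $s\in\mathbb R$, $\int_{\mathbb R}K(s)\,ds=1$, and $\int_{\mathbb R}K(s)e^{\lambda s}ds<\infty$ for every $\lambda\in\mathbb R$. Fix $p>1$. For $h\ge0$, $z\in\mathbb R$, $\varepsilon>0$ set $$\psi_h(z,\varepsilon)=\varepsilon z^2-z-1+p\,e^{-zh}\int_{\mathbb R}K(s)e^{-\sqrt{\varepsilon}\,zs}\,ds .$$ Standing fact (known, assumed): for every $h\ge0$ there is exactly one pair $(z_0(h),\varepsilon_0(h))$ with $z_0(h)>0$, $\varepsilon_0(h)>0$ satisfying $\psi_h(z_0,\varepsilon_0)=0$ and $\partial_z\psi_h(z_0,\varepsilon_0)=0$; moreover $\varepsilon_0(h)$ is the largest $\varepsilon>0$ for which $\psi_h(\cdot,\varepsilon)$ has a positive zero, and $\psi_h(z,\varepsilon)>0$ for all $z>0$ whenever $\varepsilon>\varepsilon_0(h)$. Define $c_*(h)=1/\sqrt{\varepsilon_0(h)}$. *)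

theory Defs
  imports "HOL-Analysis.Analysis"
begin

definition psi :: "(real \<Rightarrow> real) \<Rightarrow> real \<Rightarrow> real \<Rightarrow> real \<Rightarrow> real \<Rightarrow> real" where
  "psi K p h z \<epsilon> = \<epsilon> * z\<^sup>2 - z - 1
     + p * exp (- z * h) * (LINT s|lborel. K s * exp (- sqrt \<epsilon> * z * s))"

definition tangent_pair :: "(real \<Rightarrow> real) \<Rightarrow> real \<Rightarrow> real \<Rightarrow> real \<Rightarrow> real \<Rightarrow> bool" where
  "tangent_pair K p h z \<epsilon> \<longleftrightarrow> z > 0 \<and> \<epsilon> > 0 \<and> psi K p h z \<epsilon> = 0 \<and>
     ((\<lambda>y. psi K p h y \<epsilon>) has_real_derivative 0) (at z)"

definition z0 :: "(real \<Rightarrow> real) \<Rightarrow> real \<Rightarrow> real \<Rightarrow> real" where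
  "z0 K p h = fst (THE q. tangent_pair K p h (fst q) (snd q))"

definition eps0 :: "(real \<Rightarrow> real) \<Rightarrow> real \<Rightarrow> real \<Rightarrow> real" where
  "eps0 K p h = snd (THE q. tangent_pair K p h (fst q) (snd q))"

definition G :: "(real \<Rightarrow> real) \<Rightarrow> real \<Rightarrow> real \<Rightarrow> real \<Rightarrow> real" where
  "G K p h w = 1 + w / sqrt (eps0 K p h) - w\<^sup>2"

definition w0 :: "(real \<Rightarrow> real) \<Rightarrow> real \<Rightarrow> real \<Rightarrow> real" where
  "w0 K p h = sqrt (eps0 K p h) * z0 K p h"

end

theory Submission
  imports Defs
begin

text \<open>
  Substituting \<open>w = \<surd>\<epsilon> z\<close> and \<open>c = 1/\<surd>\<epsilon>\<close> turns \<open>\<psi>\<^sub>h(z, \<epsilon>)\<close> into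
  \<open>\<Psi>(w, c, h) = w\<^sup>2 - c w - 1 + p e\<^sup>-\<^sup>c\<^sup>h\<^sup>w J(w)\<close> with \<open>J(w) = \<integral> K(s) e\<^sup>-\<^sup>w\<^sup>s ds\<close>.
  The standing facts say that \<open>\<Psi>(w0(h), c\<^sub>*(h), h) = 0\<close> and \<open>\<Psi>(w, c, h) > 0\<close> for all
  \<open>w > 0\<close> and \<open>0 < c < c\<^sub>*(h)\<close>; no differentiability of \<open>\<psi>\<close> is used.
  By continuity \<open>\<Psi>(\<cdot>, c\<^sub>*(h), h) \<ge> 0\<close>, so comparing \<open>\<Psi>\<close> at the rate \<open>w0\<close> of one delay
  with the speed of another gives, for all \<open>h, s \<ge> 0\<close>, an exact secant relation
  \<open>c\<^sub>*(s) - c\<^sub>*(h) = - \<theta> (s c\<^sub>*(s) - h c\<^sub>*(h))\<close> with \<open>\<theta>\<close> between two exponentially tilted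
  values of \<open>G\<close>. This yields monotonicity and Lipschitz continuity of \<open>c\<^sub>*\<close>; strong convexity of
  \<open>\<Psi>\<close> in \<open>w\<close> then gives continuity of \<open>w0\<close>, so \<open>\<theta> \<rightarrow> G(w0(h))\<close> and
  \<open>c\<^sub>*' = - c\<^sub>* G / (1 + h G)\<close>.
\<close>

definition psi_cw :: "real \<Rightarrow> (real \<Rightarrow> real) \<Rightarrow> real \<Rightarrow> real \<Rightarrow> real \<Rightarrow> real" where
  "psi_cw p J w x t = w\<^sup>2 - x * w - 1 + p * (exp (- (x * t) * w) * J w)"

lemma psi_cw_shift:
  "psi_cw p J w x' t' = psi_cw p J w x t - (x' - x) * w
     + p * (exp (- (x * t) * w) * J w) * (exp (- (x' * t' - x * t) * w) - 1)"
proof -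
  have "exp (- (x * t) * w) * exp (- (x' * t' - x * t) * w) = exp (- (x' * t') * w)"
    by (simp flip: exp_add add: algebra_simps)
  then show ?thesis
    unfolding psi_cw_def by (simp add: algebra_simps)
qed

lemma exp_minus_one_le: "exp y - 1 \<le> y * exp (y :: real)"
proof -
  have "(1 - y) * exp y \<le> exp (- y) * exp y"
    using exp_ge_add_one_self[of "- y"] by (intro mult_right_mono) auto
  then show ?thesis by (simp add: algebra_simps flip: exp_add)
qed

locale critical_curve =
  fixes p :: real and J c W :: "real \<Rightarrow> real"
  assumes p_pos: "p > 0"
    and J_pos: "\<And>w. J w > 0"
    and tilt_convex: "\<And>k. convex_on UNIV (\<lambda>w. exp (- k * w) * J w)"
    and c_pos: "\<And>t. t \<ge> 0 \<Longrightarrow> c t > 0"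
    and W_pos: "\<And>t. t \<ge> 0 \<Longrightarrow> W t > 0"
    and on_curve: "\<And>t. t \<ge> 0 \<Longrightarrow> psi_cw p J (W t) (c t) t = 0"
    and below_curve: "\<And>t w x. t \<ge> 0 \<Longrightarrow> w > 0 \<Longrightarrow> 0 < x \<Longrightarrow> x < c t \<Longrightarrow> psi_cw p J w x t > 0"
begin

abbreviation Q :: "real \<Rightarrow> real \<Rightarrow> real \<Rightarrow> real" where
  "Q \<equiv> psi_cw p J"

text \<open>By continuity in the speed, \<open>\<Psi>\<close> is nonnegative on the curve itself, so \<open>W t\<close> minimises
  \<open>\<Psi>(\<cdot>, c t, t)\<close>.\<close>
lemma Q_nonneg_at_curve:
  assumes t: "t \<ge> 0" and w: "w > 0"
  shows "Q w (c t) t \<ge> 0"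
proof (rule tendsto_lowerbound)
  show "((\<lambda>x. Q w x t) \<longlongrightarrow> Q w (c t) t) (at_left (c t))"
    unfolding psi_cw_def by (intro tendsto_intros)
  show "\<forall>\<^sub>F x in at_left (c t). 0 \<le> Q w x t"
    using eventually_at_left_real[of 0 "c t"] c_pos[OF t]
    by (auto elim!: eventually_mono intro: less_imp_le below_curve[OF t w])
qed simp

text \<open>The quantity \<open>G\<close> of the theorem; on the curve it equals the exponential part of \<open>\<Psi>\<close>.\<close>
definition A :: "real \<Rightarrow> real" where
  "A t = 1 + c t * W t - (W t)\<^sup>2"

lemma A_eq: "t \<ge> 0 \<Longrightarrow> A t = p * (exp (- (c t * t) * W t) * J (W t))"
  using on_curve[of t] unfolding psi_cw_def A_def by linarith

lemma A_pos: "t \<ge> 0 \<Longrightarrow> A t > 0"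
  using A_eq p_pos J_pos by simp

lemma W_lt: assumes t: "t \<ge> 0" shows "W t < c t + 1"
proof (rule ccontr)
  assume "\<not> W t < c t + 1"
  then have "W t * (W t - c t) \<ge> W t * 1"
    using W_pos[OF t] by (intro mult_left_mono) auto
  then have "A t \<le> 1 - W t"
    unfolding A_def by (simp add: algebra_simps power2_eq_square)
  then show False
    using A_pos[OF t] \<open>\<not> W t < c t + 1\<close> c_pos[OF t] by linarith
qed

definition lag :: "real \<Rightarrow> real \<Rightarrow> real" where
  "lag t s = c s * s - c t * t"

definition tilted_A :: "real \<Rightarrow> real \<Rightarrow> real" where
  "tilted_A t s = A t * exp (- lag t s * W t)"

lemma lag_swap: "lag s t = - lag t s"
  unfolding lag_def by simp

lemma tilted_A_pos: "t \<ge> 0 \<Longrightarrow> tilted_A t s > 0"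
  unfolding tilted_A_def using A_pos by simp

text \<open>Comparing \<open>\<Psi>\<close> at \<open>(W t, c s, s)\<close>, which is \<open>\<ge> 0\<close>, with its value \<open>0\<close> at \<open>(W t, c t, t)\<close>
  yields a one-sided bound for the secant of \<open>c\<close>.\<close>
lemma secant_bound:
  assumes s: "s \<ge> 0" and t: "t \<ge> 0"
  shows "c s - c t \<le> - tilted_A t s * lag t s"
proof -
  define u where "u = lag t s"
  have "0 \<le> Q (W t) (c s) s"
    by (rule Q_nonneg_at_curve[OF s W_pos[OF t]])
  also have "\<dots> = - (c s - c t) * W t + A t * (exp (- u * W t) - 1)"
    using psi_cw_shift[of p J "W t" "c s" s "c t" t] on_curve[OF t] A_eq[OF t]
    by (simp add: u_def lag_def algebra_simps)
  also have "\<dots> \<le> - (c s - c t) * W t + A t * (- u * W t * exp (- u * W t))"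
    using exp_minus_one_le[of "- u * W t"] A_pos[OF t] by (intro add_left_mono mult_left_mono) auto
  finally have "W t * (c s - c t) \<le> W t * (- tilted_A t s * lag t s)"
    unfolding tilted_A_def u_def by (simp add: algebra_simps)
  then show ?thesis using mult_le_cancel_left_pos[OF W_pos[OF t]] by blast
qed

text \<open>This is the discrete form of the derivative formula.\<close>
lemma secant_coefficient:
  assumes s: "s \<ge> 0" and t: "t \<ge> 0"
  obtains \<theta> where "0 < \<theta>" "min (tilted_A t s) (tilted_A s t) \<le> \<theta>"
    "\<theta> \<le> max (tilted_A t s) (tilted_A s t)" "c s - c t = - \<theta> * lag t s"
proof -
  define u where "u = lag t s"
  define a where "a = tilted_A t s"
  define a' where "a' = tilted_A s t"
  have pos: "0 < a" "0 < a'" unfolding a_def a'_def using tilted_A_pos s t by auto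
  have upper: "c s - c t \<le> - a * u"
    using secant_bound[OF s t] unfolding a_def u_def by simp
  have lower: "- a' * u \<le> c s - c t"
    using secant_bound[OF t s] unfolding a'_def u_def lag_swap[of s t] by simp
  consider "u = 0" | "u > 0" | "u < 0" by linarith
  then show thesis
  proof cases
    case 1
    then show thesis using that[of a] upper lower pos unfolding a_def a'_def u_def by simp
  next
    case 2
    then have "a \<le> - (c s - c t) / u" "- (c s - c t) / u \<le> a'"
      using upper lower by (simp_all add: field_simps)
    then show thesis using that[of "- (c s - c t) / u"] 2 pos unfolding a_def a'_def u_def by simp
  next
    case 3
    then have "a' \<le> - (c s - c t) / u" "- (c s - c t) / u \<le> a"
      using upper lower by (simp_all add: field_simps)
    then show thesis using that[of "- (c s - c t) / u"] 3 pos unfolding a_def a'_def u_def by simp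
  qed
qed

text \<open>Solving the secant relation for the secant of \<open>c\<close>, using \<open>lag t s = (c s - c t) s + c t (s - t)\<close>.\<close>
lemma secant_identities:
  assumes s: "s \<ge> 0" and t: "t \<ge> 0" and \<theta>: "\<theta> \<ge> 0"
    and sec: "c s - c t = - \<theta> * lag t s"
  shows "(c s - c t) * (1 + \<theta> * s) = - \<theta> * c t * (s - t)"
    and "\<bar>lag t s\<bar> \<le> c t * \<bar>s - t\<bar>"
proof -
  have "lag t s * (1 + \<theta> * s) = lag t s + (\<theta> * lag t s) * s"
    by (simp add: algebra_simps)
  also have "\<dots> = lag t s - (c s - c t) * s"
    using sec by simp
  also have "\<dots> = c t * (s - t)"
    unfolding lag_def by (simp add: algebra_simps)
  finally have lag: "lag t s * (1 + \<theta> * s) = c t * (s - t)" .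
  have "(c s - c t) * (1 + \<theta> * s) = - \<theta> * (lag t s * (1 + \<theta> * s))"
    using sec by simp
  then show "(c s - c t) * (1 + \<theta> * s) = - \<theta> * c t * (s - t)"
    using lag by simp
  have "1 \<le> 1 + \<theta> * s" using s \<theta> by simp
  then have "\<bar>lag t s\<bar> * 1 \<le> \<bar>lag t s\<bar> * (1 + \<theta> * s)"
    by (intro mult_left_mono) auto
  also have "\<dots> = c t * \<bar>s - t\<bar>"
    using arg_cong[OF lag, of abs] c_pos[OF t] s \<theta> by (simp add: abs_mult)
  finally show "\<bar>lag t s\<bar> \<le> c t * \<bar>s - t\<bar>" by simp
qed

lemma c_antitone:
  assumes t: "t \<ge> 0" and ts: "t \<le> s"
  shows "c s \<le> c t"
proof -
  have s: "s \<ge> 0" using t ts by simp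
  obtain \<theta> where "\<theta> > 0" and sec: "c s - c t = - \<theta> * lag t s"
    by (rule secant_coefficient[OF s t])
  have "(c s - c t) * (1 + \<theta> * s) = - (\<theta> * c t * (s - t))"
    using secant_identities(1)[OF s t _ sec] \<open>\<theta> > 0\<close> by simp
  moreover have "0 \<le> \<theta> * c t * (s - t)"
    using \<open>\<theta> > 0\<close> c_pos[OF t] ts by simp
  ultimately have "(c s - c t) * (1 + \<theta> * s) \<le> 0" by linarith
  moreover have "1 + \<theta> * s > 0" using \<open>\<theta> > 0\<close> s by (simp add: add_pos_nonneg)
  ultimately show ?thesis by (simp add: mult_le_0_iff)
qed

text \<open>Monotonicity gives bounds for \<open>c\<close>, \<open>W\<close> and \<open>A\<close> that are uniform in \<open>t \<ge> 0\<close>.\<close>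
lemma c_le_c0: "t \<ge> 0 \<Longrightarrow> c t \<le> c 0"
  using c_antitone[of 0 t] by simp

lemma W_le: "t \<ge> 0 \<Longrightarrow> W t \<le> c 0 + 1"
  using W_lt[of t] c_le_c0[of t] by simp

definition A_max :: real where
  "A_max = 1 + c 0 * (c 0 + 1)"

lemma A_le_A_max: assumes t: "t \<ge> 0" shows "A t \<le> A_max"
proof -
  have "c t * W t \<le> c 0 * (c 0 + 1)"
    using c_le_c0[OF t] W_le[OF t] c_pos[OF t] W_pos[OF t] by (intro mult_mono) auto
  moreover have "0 \<le> (W t)\<^sup>2" by simp
  ultimately show ?thesis unfolding A_def A_max_def by linarith
qed

lemma tilted_A_le:
  assumes t: "t \<ge> 0"
  shows "tilted_A t s \<le> A_max * exp (\<bar>lag t s\<bar> * (c 0 + 1))"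
proof -
  have "- lag t s * W t \<le> \<bar>lag t s\<bar> * (c 0 + 1)"
    using W_le[OF t] W_pos[OF t] abs_ge_self[of "- lag t s"]
    by (metis abs_ge_zero abs_minus_cancel mult_mono order_less_imp_le order_trans)
  then show ?thesis unfolding tilted_A_def
    using A_le_A_max[OF t] A_pos[OF t] by (intro mult_mono) auto
qed

lemma secant_growth:
  assumes s: "s \<ge> 0" and t: "t \<ge> 0"
  shows "\<bar>c s - c t\<bar> \<le> A_max * exp (\<bar>lag t s\<bar> * (c 0 + 1)) * \<bar>lag t s\<bar>"
proof -
  obtain \<theta> where "\<theta> > 0" and \<theta>: "\<theta> \<le> max (tilted_A t s) (tilted_A s t)" "c s - c t = - \<theta> * lag t s"
    by (rule secant_coefficient[OF s t])
  have "\<theta> \<le> A_max * exp (\<bar>lag t s\<bar> * (c 0 + 1))"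
    using \<theta>(1) tilted_A_le[OF t, of s] tilted_A_le[OF s, of t] unfolding lag_swap[of s t] by simp
  then have "\<theta> * \<bar>lag t s\<bar> \<le> A_max * exp (\<bar>lag t s\<bar> * (c 0 + 1)) * \<bar>lag t s\<bar>"
    by (intro mult_right_mono) auto
  then show ?thesis using \<theta>(2) \<open>\<theta> > 0\<close> by (simp add: abs_mult)
qed

lemma eventually_nonneg: "eventually (\<lambda>s. s \<ge> 0) (at t within {0..})"
  by (simp add: eventually_at_filter)

text \<open>Continuity of \<open>c\<close>: by the last two lemmas, \<open>|c s - c t|\<close> is \<open>O(|s - t|)\<close>.\<close>
lemma c_continuous:
  assumes t: "t \<ge> 0"
  shows "(c \<longlongrightarrow> c t) (at t within {0..})"
proof -
  define g where "g s = A_max * exp (c t * \<bar>s - t\<bar> * (c 0 + 1)) * (c t * \<bar>s - t\<bar>)" for s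
  have bound: "\<bar>c s - c t\<bar> \<le> g s" if s: "s \<ge> 0" for s
  proof -
    have lag: "\<bar>lag t s\<bar> \<le> c t * \<bar>s - t\<bar>"
      using secant_coefficient[OF s t] secant_identities(2)[OF s t] by (metis less_imp_le)
    have "0 \<le> A_max" unfolding A_max_def using c_pos[of 0] by simp
    have "\<bar>c s - c t\<bar> \<le> A_max * exp (\<bar>lag t s\<bar> * (c 0 + 1)) * \<bar>lag t s\<bar>"
      by (rule secant_growth[OF s t])
    also have "\<dots> \<le> g s"
      unfolding g_def using lag \<open>0 \<le> A_max\<close> c_pos[of 0]
      by (intro mult_mono mult_left_mono mult_right_mono) auto
    finally show ?thesis .
  qed
  have "\<forall>\<^sub>F s in at t within {0..}. norm (c s - c t) \<le> g s"
    using eventually_nonneg[of t] by (rule eventually_mono) (simp add: bound)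
  moreover have "(g \<longlongrightarrow> 0) (at t within {0..})"
  proof -
    have "(g \<longlongrightarrow> g t) (at t within {0..})"
      unfolding g_def by (intro tendsto_intros)
    then show ?thesis by (simp add: g_def)
  qed
  ultimately have "((\<lambda>s. c s - c t) \<longlongrightarrow> 0) (at t within {0..})"
    by (rule Lim_null_comparison)
  then show ?thesis by (simp add: LIM_zero_iff)
qed

lemma lag_tendsto:
  assumes t: "t \<ge> 0"
  shows "(lag t \<longlongrightarrow> 0) (at t within {0..})"
proof -
  have "((\<lambda>s. c s * s - c t * t) \<longlongrightarrow> c t * t - c t * t) (at t within {0..})"
    by (intro tendsto_intros c_continuous[OF t])
  then show ?thesis unfolding lag_def by simp
qed

text \<open>Strong convexity: \<open>\<Psi>(\<cdot>, c t, t)\<close> is a convex function plus \<open>w\<^sup>2\<close>, and its minimum \<open>0\<close>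
  is attained at \<open>W t\<close>; hence it grows at least quadratically away from \<open>W t\<close>.\<close>
lemma Q_quadratic_growth:
  assumes t: "t \<ge> 0" and w: "w > 0"
  shows "(w - W t)\<^sup>2 \<le> 2 * Q w (c t) t"
proof -
  define R where "R v = p * (exp (- (c t * t) * v) * J v)" for v
  define m where "m = (w + W t) / 2"
  have "convex_on UNIV R"
    unfolding R_def using p_pos tilt_convex by (intro convex_on_cmul) auto
  then have "R ((1 - 1/2) *\<^sub>R w + (1/2) *\<^sub>R W t) \<le> (1 - 1/2) * R w + (1/2) * R (W t)"
    by (rule convex_onD) auto
  then have R_mid: "R m \<le> (R w + R (W t)) / 2"
    unfolding m_def by (simp add: add_divide_distrib)
  have Q_eq: "Q v (c t) t = v\<^sup>2 - c t * v - 1 + R v" for v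
    unfolding psi_cw_def R_def by simp
  have "0 \<le> Q m (c t) t"
    using Q_nonneg_at_curve[OF t] w W_pos[OF t] unfolding m_def by simp
  also have "\<dots> \<le> (Q w (c t) t + Q (W t) (c t) t) / 2 - (w - W t)\<^sup>2 / 4"
    using R_mid unfolding Q_eq m_def by (simp add: field_simps power2_eq_square)
  finally show ?thesis using on_curve[OF t] by simp
qed

text \<open>Evaluating the quadratic growth at \<open>W s\<close> and moving \<open>\<Psi>\<close> from \<open>(c s, s)\<close> to \<open>(c t, t)\<close>
  bounds the displacement of the rate curve by that of the speed and the delay.\<close>
lemma W_displacement:
  assumes s: "s \<ge> 0" and t: "t \<ge> 0"
  shows "(W s - W t)\<^sup>2 \<le> 2 * (\<bar>c s - c t\<bar> * (c 0 + 1) + A_max * (exp (\<bar>lag t s\<bar> * (c 0 + 1)) - 1))"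
proof -
  have E: "exp (lag t s * W s) \<le> exp (\<bar>lag t s\<bar> * (c 0 + 1))"
    using W_le[OF s] W_pos[OF s] abs_ge_self[of "lag t s"]
    by (simp, metis abs_ge_zero mult_mono order_less_imp_le order_trans)
  have "(W s - W t)\<^sup>2 \<le> 2 * Q (W s) (c t) t"
    by (rule Q_quadratic_growth[OF t W_pos[OF s]])
  also have "Q (W s) (c t) t = (c s - c t) * W s + A s * (exp (lag t s * W s) - 1)"
    using psi_cw_shift[of p J "W s" "c t" t "c s" s] on_curve[OF s] A_eq[OF s]
    by (simp add: lag_def algebra_simps)
  also have "(c s - c t) * W s \<le> \<bar>c s - c t\<bar> * (c 0 + 1)"
    using W_le[OF s] W_pos[OF s]
    by (metis abs_ge_self abs_ge_zero mult_mono order_less_imp_le)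
  also have "A s * (exp (lag t s * W s) - 1) \<le> A s * (exp (\<bar>lag t s\<bar> * (c 0 + 1)) - 1)"
    using E A_pos[OF s] by (intro mult_left_mono) auto
  also have "\<dots> \<le> A_max * (exp (\<bar>lag t s\<bar> * (c 0 + 1)) - 1)"
    using A_le_A_max[OF s] c_pos[of 0] by (intro mult_right_mono) auto
  finally show ?thesis by simp
qed

lemma W_continuous:
  assumes t: "t \<ge> 0"
  shows "(W \<longlongrightarrow> W t) (at t within {0..})"
proof -
  define g where "g s = 2 * (\<bar>c s - c t\<bar> * (c 0 + 1) + A_max * (exp (\<bar>lag t s\<bar> * (c 0 + 1)) - 1))" for s
  have "((\<lambda>s. c s - c t) \<longlongrightarrow> 0) (at t within {0..})"
    using c_continuous[OF t] by (simp add: LIM_zero_iff)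
  then have "(g \<longlongrightarrow> 2 * (0 * (c 0 + 1) + A_max * (exp (0 * (c 0 + 1)) - 1))) (at t within {0..})"
    unfolding g_def using lag_tendsto[OF t] by (intro tendsto_intros tendsto_rabs_zero)
  then have sqrt_lim: "((\<lambda>s. sqrt (g s)) \<longlongrightarrow> 0) (at t within {0..})"
    using tendsto_real_sqrt by fastforce
  have "\<forall>\<^sub>F s in at t within {0..}. norm (W s - W t) \<le> sqrt (g s)"
    using eventually_nonneg[of t]
  proof (rule eventually_mono)
    fix s :: real assume "s \<ge> 0"
    then show "norm (W s - W t) \<le> sqrt (g s)"
      using real_sqrt_le_mono[OF W_displacement[OF _ t]] unfolding g_def by simp
  qed
  then have "((\<lambda>s. W s - W t) \<longlongrightarrow> 0) (at t within {0..})"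
    using sqrt_lim by (rule Lim_null_comparison)
  then show ?thesis by (simp add: LIM_zero_iff)
qed

lemma A_continuous:
  assumes t: "t \<ge> 0"
  shows "(A \<longlongrightarrow> A t) (at t within {0..})"
  unfolding A_def by (intro tendsto_intros c_continuous[OF t] W_continuous[OF t])

text \<open>Both tilted values of \<open>A\<close> tend to \<open>A t\<close>, hence so does every secant coefficient.\<close>
lemma secant_coefficient_tendsto:
  assumes t: "t \<ge> 0"
    and between: "\<And>s. s \<ge> 0 \<Longrightarrow>
      min (tilted_A t s) (tilted_A s t) \<le> \<theta> s \<and> \<theta> s \<le> max (tilted_A t s) (tilted_A s t)"
  shows "(\<theta> \<longlongrightarrow> A t) (at t within {0..})"
proof -
  have "((\<lambda>s. tilted_A t s) \<longlongrightarrow> A t * exp (- 0 * W t)) (at t within {0..})"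
    unfolding tilted_A_def by (intro tendsto_intros lag_tendsto[OF t])
  then have a_lim: "((\<lambda>s. tilted_A t s) \<longlongrightarrow> A t) (at t within {0..})" by simp
  have "((\<lambda>s. A s * exp (lag t s * W s)) \<longlongrightarrow> A t * exp (0 * W t)) (at t within {0..})"
    by (intro tendsto_intros lag_tendsto[OF t] A_continuous[OF t] W_continuous[OF t])
  then have a'_lim: "((\<lambda>s. tilted_A s t) \<longlongrightarrow> A t) (at t within {0..})"
    unfolding tilted_A_def lag_swap[of _ t] by simp
  have "\<forall>\<^sub>F s in at t within {0..}. min (tilted_A t s) (tilted_A s t) \<le> \<theta> s"
    and "\<forall>\<^sub>F s in at t within {0..}. \<theta> s \<le> max (tilted_A t s) (tilted_A s t)"
    using eventually_nonneg[of t] between by (auto elim: eventually_mono)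
  moreover have "((\<lambda>s. min (tilted_A t s) (tilted_A s t)) \<longlongrightarrow> A t) (at t within {0..})"
    using tendsto_min[OF a_lim a'_lim] by simp
  moreover have "((\<lambda>s. max (tilted_A t s) (tilted_A s t)) \<longlongrightarrow> A t) (at t within {0..})"
    using tendsto_max[OF a_lim a'_lim] by simp
  ultimately show ?thesis
    by (intro tendsto_sandwich[of "\<lambda>s. min (tilted_A t s) (tilted_A s t)" \<theta> _
          "\<lambda>s. max (tilted_A t s) (tilted_A s t)"])
qed

theorem c_has_derivative:
  assumes t: "t \<ge> 0"
  shows "(c has_real_derivative - c t * A t / (1 + t * A t)) (at t within {0..})"
proof -
  have "\<forall>s\<in>{0..}. \<exists>\<theta>. 0 < \<theta> \<and> min (tilted_A t s) (tilted_A s t) \<le> \<theta> \<and>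
      \<theta> \<le> max (tilted_A t s) (tilted_A s t) \<and> c s - c t = - \<theta> * lag t s"
    using secant_coefficient[OF _ t] by (metis atLeast_iff)
  then obtain \<theta> where \<theta>: "\<And>s. s \<ge> 0 \<Longrightarrow> 0 < \<theta> s \<and> min (tilted_A t s) (tilted_A s t) \<le> \<theta> s \<and>
      \<theta> s \<le> max (tilted_A t s) (tilted_A s t) \<and> c s - c t = - \<theta> s * lag t s"
    by (metis atLeast_iff)
  have slope: "(c s - c t) / (s - t) = - \<theta> s * c t / (1 + \<theta> s * s)" if s: "s \<ge> 0" "s \<noteq> t" for s
  proof -
    have "(c s - c t) * (1 + \<theta> s * s) = - \<theta> s * c t * (s - t)"
      using secant_identities(1)[OF s(1) t] \<theta>[OF s(1)] by simp
    moreover have "1 + \<theta> s * s > 0" using \<theta>[OF s(1)] s(1) by (simp add: add_pos_nonneg)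
    ultimately show ?thesis using s(2) by (simp add: field_simps)
  qed
  have \<theta>_lim: "(\<theta> \<longlongrightarrow> A t) (at t within {0..})"
    by (rule secant_coefficient_tendsto[OF t]) (use \<theta> in blast)
  have "0 \<le> A t * t" using A_pos[OF t] t by simp
  then have "1 + A t * t \<noteq> 0" by linarith
  then have lim: "((\<lambda>s. - \<theta> s * c t / (1 + \<theta> s * s)) \<longlongrightarrow> - A t * c t / (1 + A t * t)) (at t within {0..})"
    by (intro tendsto_intros \<theta>_lim)
  have "\<forall>\<^sub>F s in at t within {0..}. - \<theta> s * c t / (1 + \<theta> s * s) = (c s - c t) / (s - t)"
    by (auto simp: eventually_at_filter slope)
  from Lim_transform_eventually[OF lim this] show ?thesis
    unfolding has_field_derivative_iff by (simp add: mult.commute)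
qed

lemma inverse_square_has_derivative:
  assumes t: "t \<ge> 0" and eps: "\<And>s. s \<ge> 0 \<Longrightarrow> \<epsilon> s = inverse (c s ^ 2)"
  shows "(\<epsilon> has_real_derivative 2 * \<epsilon> t * A t / (1 + t * A t)) (at t within {0..})"
proof -
  have "0 \<le> t * A t" using A_pos[OF t] t by simp
  then have "1 + t * A t \<noteq> 0" by linarith
  have "c t \<noteq> 0" using c_pos[OF t] by simp
  have d: "((\<lambda>s. inverse (c s ^ 2)) has_real_derivative
      - (of_nat 2 * ((- c t * A t / (1 + t * A t)) * c t ^ (2 - Suc 0)) * inverse ((c t ^ 2) ^ Suc (Suc 0))))
      (at t within {0..})"
    by (rule DERIV_inverse_fun[OF DERIV_power[OF c_has_derivative[OF t]]]) (use \<open>c t \<noteq> 0\<close> in simp)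
  have v: "- (of_nat 2 * ((- c t * A t / (1 + t * A t)) * c t ^ (2 - Suc 0)) * inverse ((c t ^ 2) ^ Suc (Suc 0)))
      = 2 * inverse (c t ^ 2) * A t / (1 + t * A t)"
    using \<open>c t \<noteq> 0\<close> \<open>1 + t * A t \<noteq> 0\<close> by (simp add: field_simps power2_eq_square)
  show ?thesis
    using has_field_derivative_transform_within[OF d[unfolded v] zero_less_one, of \<epsilon>] t eps
    by (simp add: eps[OF t])
qed

end

lemma laplace_pos:
  fixes K :: "real \<Rightarrow> real"
  assumes K_nonneg: "\<And>s. K s \<ge> 0"
    and K_mass: "(LINT s|lborel. K s) = 1"
    and K_exp: "\<And>l. integrable lborel (\<lambda>s. K s * exp (l * s))"
  shows "(LINT s|lborel. K s * exp (- w * s)) > 0"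
proof -
  have int: "integrable lborel (\<lambda>s. K s * exp (- w * s))" using K_exp[of "- w"] by simp
  have nn: "AE s in lborel. 0 \<le> K s * exp (- w * s)" using K_nonneg by simp
  have "(LINT s|lborel. K s * exp (- w * s)) \<noteq> 0"
  proof
    assume "(LINT s|lborel. K s * exp (- w * s)) = 0"
    then have "AE s in lborel. K s * exp (- w * s) = 0"
      using integral_nonneg_eq_0_iff_AE[OF int nn] by simp
    then have "AE s in lborel. K s = 0" by (rule AE_mp) simp
    then have "(LINT s|lborel. K s) = 0" by (rule integral_eq_zero_AE)
    then show False using K_mass by simp
  qed
  then show ?thesis using integral_nonneg_AE[OF nn] by simp
qed

text \<open>Every exponential tilt \<open>e\<^sup>-\<^sup>k\<^sup>w J(w)\<close> of the Laplace transform \<open>J\<close> is convex,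
  being an integral of the convex functions \<open>w \<mapsto> K(s) e\<^sup>-\<^sup>w\<^sup>(\<^sup>k\<^sup>+\<^sup>s\<^sup>)\<close>.\<close>
lemma laplace_tilt_convex:
  fixes K :: "real \<Rightarrow> real"
  assumes K_nonneg: "\<And>s. K s \<ge> 0"
    and K_exp: "\<And>l. integrable lborel (\<lambda>s. K s * exp (l * s))"
  shows "convex_on UNIV (\<lambda>w. exp (- k * w) * (LINT s|lborel. K s * exp (- w * s)))"
proof
  define F where "F w s = K s * exp (- w * (k + s))" for w s
  have F_int: "integrable lborel (F w)" for w
  proof -
    have "integrable lborel (\<lambda>s. exp (- w * k) * (K s * exp (- w * s)))"
      using K_exp[of "- w"] by simp
    also have "(\<lambda>s. exp (- w * k) * (K s * exp (- w * s))) = F w"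
      unfolding F_def by (simp add: algebra_simps flip: exp_add)
    finally show ?thesis .
  qed
  have F_eq: "exp (- k * w) * (LINT s|lborel. K s * exp (- w * s)) = (LINT s|lborel. F w s)" for w
    unfolding F_def by (simp flip: integral_mult_right_zero add: algebra_simps exp_add[symmetric])
  fix l x y :: real assume l: "0 < l" "l < 1"
  have "F ((1 - l) *\<^sub>R x + l *\<^sub>R y) s \<le> (1 - l) * F x s + l * F y s" for s
  proof -
    have "exp ((1 - l) *\<^sub>R (- x * (k + s)) + l *\<^sub>R (- y * (k + s)))
        \<le> (1 - l) * exp (- x * (k + s)) + l * exp (- y * (k + s))"
      using l by (intro convex_onD[OF exp_convex]) auto
    then have "exp (- ((1 - l) *\<^sub>R x + l *\<^sub>R y) * (k + s))
        \<le> (1 - l) * exp (- x * (k + s)) + l * exp (- y * (k + s))"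
      by (simp add: algebra_simps)
    then have "K s * exp (- ((1 - l) *\<^sub>R x + l *\<^sub>R y) * (k + s))
        \<le> K s * ((1 - l) * exp (- x * (k + s)) + l * exp (- y * (k + s)))"
      using K_nonneg[of s] by (rule mult_left_mono)
    then show ?thesis
      unfolding F_def by (simp add: algebra_simps)
  qed
  then have "(LINT s|lborel. F ((1 - l) *\<^sub>R x + l *\<^sub>R y) s) \<le> (LINT s|lborel. (1 - l) * F x s + l * F y s)"
    using F_int by (intro integral_mono) auto
  also have "\<dots> = (1 - l) * (LINT s|lborel. F x s) + l * (LINT s|lborel. F y s)"
    using F_int by simp
  finally show "exp (- k * ((1 - l) *\<^sub>R x + l *\<^sub>R y)) * (LINT s|lborel. K s * exp (- ((1 - l) *\<^sub>R x + l *\<^sub>R y) * s))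
      \<le> (1 - l) * (exp (- k * x) * (LINT s|lborel. K s * exp (- x * s))) + l * (exp (- k * y) * (LINT s|lborel. K s * exp (- y * s)))"
    unfolding F_eq .
qed simp

lemma psi_as_psi_cw:
  assumes "\<epsilon> > 0"
  shows "psi K p h z \<epsilon> = psi_cw p (\<lambda>w. LINT s|lborel. K s * exp (- w * s)) (sqrt \<epsilon> * z) (1 / sqrt \<epsilon>) h"
proof -
  have "sqrt \<epsilon> > 0" using assms by simp
  then show ?thesis
    unfolding psi_def psi_cw_def using assms by (simp add: power_mult_distrib field_simps)
qed

lemma psi_cw_pos_below_speed:
  assumes e0: "\<epsilon>\<^sub>0 > 0" and above: "\<And>\<epsilon> z. \<epsilon> > \<epsilon>\<^sub>0 \<Longrightarrow> z > 0 \<Longrightarrow> psi K p h z \<epsilon> > 0"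
    and w: "w > 0" and x: "0 < x" "x < 1 / sqrt \<epsilon>\<^sub>0"
  shows "psi_cw p (\<lambda>w. LINT s|lborel. K s * exp (- w * s)) w x h > 0"
proof -
  have "x * sqrt \<epsilon>\<^sub>0 < 1" using x e0 by (simp add: field_simps)
  then have "(x * sqrt \<epsilon>\<^sub>0)\<^sup>2 < 1\<^sup>2" using x e0 by (intro power_strict_mono) auto
  then have "\<epsilon>\<^sub>0 < 1 / x\<^sup>2" using x e0 by (simp add: power_mult_distrib field_simps)
  then have "psi K p h (x * w) (1 / x\<^sup>2) > 0" using above x w by simp
  moreover have "sqrt (1 / x\<^sup>2) = 1 / x" using x by (simp add: real_sqrt_divide)
  ultimately show ?thesis
    using psi_as_psi_cw[of "1 / x\<^sup>2" K p h "x * w"] x by simp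
qed

text \<open>The standing facts make \<open>(c\<^sub>*, w0)\<close> a critical curve; \<open>G(w0(h))\<close> is the function \<open>A\<close>
  of the locale, and \<open>\<epsilon>\<^sub>0 = 1 / c\<^sub>*\<^sup>2\<close>.\<close>
theorem mainTheorem2:
  fixes K :: "real \<Rightarrow> real" and p :: real
  assumes K_meas: "K \<in> borel_measurable lborel"
    and K_nonneg: "\<And>s. K s \<ge> 0"
    and K_sym: "\<And>s. K s = K (- s)"
    and K_int: "integrable lborel K"
    and K_mass: "(LINT s|lborel. K s) = 1"
    and K_exp: "\<And>l. integrable lborel (\<lambda>s. K s * exp (l * s))"
    and p_gt: "p > 1"
    and standing_unique: "\<And>h. h \<ge> 0 \<Longrightarrow> \<exists>!q. tangent_pair K p h (fst q) (snd q)"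
    and standing_largest: "\<And>h. h \<ge> 0 \<Longrightarrow>
        (\<exists>z>0. psi K p h z (eps0 K p h) = 0) \<and>
        (\<forall>\<epsilon>>0. (\<exists>z>0. psi K p h z \<epsilon> = 0) \<longrightarrow> \<epsilon> \<le> eps0 K p h)"
    and standing_pos: "\<And>h \<epsilon> z. h \<ge> 0 \<Longrightarrow> \<epsilon> > eps0 K p h \<Longrightarrow> z > 0 \<Longrightarrow>
        psi K p h z \<epsilon> > 0"
  shows "\<forall>h\<ge>0. G K p h (w0 K p h) > 0
     \<and> (eps0 K p has_real_derivative
          (2 * eps0 K p h * G K p h (w0 K p h) / (1 + h * G K p h (w0 K p h))))
          (at h within {0..})
     \<and> 2 * eps0 K p h * G K p h (w0 K p h) / (1 + h * G K p h (w0 K p h)) > 0"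
proof -
  define J where "J w = (LINT s|lborel. K s * exp (- w * s))" for w
  define c where "c t = 1 / sqrt (eps0 K p t)" for t
  have "tangent_pair K p t (z0 K p t) (eps0 K p t)" if "t \<ge> 0" for t
    using theI'[OF standing_unique[OF that]] unfolding z0_def eps0_def .
  then have eps_pos: "eps0 K p t > 0" and z_pos: "z0 K p t > 0"
    and psi_zero: "psi K p t (z0 K p t) (eps0 K p t) = 0" if "t \<ge> 0" for t
    using that unfolding tangent_pair_def by auto
  interpret critical_curve p J c "w0 K p"
  proof
    show "p > 0" "\<And>w. J w > 0" "\<And>k. convex_on UNIV (\<lambda>w. exp (- k * w) * J w)"
      using p_gt laplace_pos[OF K_nonneg K_mass K_exp] laplace_tilt_convex[OF K_nonneg K_exp]
      unfolding J_def by auto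
    show "c t > 0" "w0 K p t > 0" "psi_cw p J (w0 K p t) (c t) t = 0" if "t \<ge> 0" for t
      using eps_pos[OF that] z_pos[OF that] psi_zero[OF that] psi_as_psi_cw[OF eps_pos[OF that]]
      unfolding c_def w0_def J_def by auto
    show "psi_cw p J w x t > 0" if "t \<ge> 0" "w > 0" "0 < x" "x < c t" for t w x
      using psi_cw_pos_below_speed[OF eps_pos standing_pos] that unfolding c_def J_def by blast
  qed
  have G_eq: "G K p h (w0 K p h) = A h" for h
    unfolding G_def A_def c_def by simp
  have eps_eq: "eps0 K p s = inverse (c s ^ 2)" if "s \<ge> 0" for s
  proof -
    have "(sqrt (eps0 K p s))\<^sup>2 = eps0 K p s" using eps_pos[OF that] by simp
    then show ?thesis unfolding c_def by (simp add: power_one_over)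
  qed
  have "2 * eps0 K p h * A h / (1 + h * A h) > 0" if h: "h \<ge> 0" for h
    using eps_pos[OF h] A_pos[OF h] h by (simp add: add_pos_nonneg)
  then show ?thesis
    unfolding G_eq using A_pos inverse_square_has_derivative[OF _ eps_eq] by simp
qed

end
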